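(* Let $0<q<1$ and let $s_1,\dots,s_m$ be positive integers with $s_1>1$. Put $y_k:=\prod_{j=1}^k q^{1-s_j}$ for $1\le k\le m$. Then \[ \zeta[s_1,\dots,s_m] = \int \prod_{k=1}^m\bigg(\prod_{r=1}^{s_k-1}\frac{d_qt_r^{(k)}}{t_r^{(k)}}\bigg)\frac{d_qt_{s_k}^{(k)}}{y_k-t_{s_k}^{(k)}}, \] the iterated Jackson $q$-integral over the simplex $1>t_1^{(1)}>\cdots>t_{s_1}^{(1)}>\cdots>t_1^{(m)}>\cdots>t_{s_m}^{(m)}>0$.
   Context: Fix $0<q<1$ and $[x]_q := (1-q^x)/(1-q)$. For positive integers $s_1,\dots,s_m$ with $s_1>1$, $\zeta[s_1,\dots,s_m] := \sum_{k_1>\cdots>k_m>0}\prod_{j=1}^m q^{(s_j-1)k_j}/[k_j]_q^{s_j}$ (sum over positive integers). The Jackson $q$-integral is $\int_0^a g(t)\,d_qt := (1-q)a\sum_{j=0}^\infty q^j g(q^ja)$ for $a>0$. The integral over a simplex $a>u_1>u_2>\cdots>u_N>0$ of $g_1(u_1)d_qu_1\cdots g_N(u_N)d_qu_N$ means the iterated integral $\int_0^a g_1(u_1)\int_0^{u_1}g_2(u_2)\cdots\int_0^{u_{N-1}}g_N(u_N)\,d_qu_N\cdots d_qu_1$, with the variables $t_1^{(1)},\dots,t_{s_m}^{(m)}$ ordered as listed and $a=1$. *)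

theory Defs
  imports "HOL-Analysis.Analysis"
begin

definition qint :: "real \<Rightarrow> nat \<Rightarrow> real" where
  "qint q x = (1 - q ^ x) / (1 - q)"

definition qzeta :: "real \<Rightarrow> nat list \<Rightarrow> real" where
  "qzeta q s = (\<Sum>\<^sub>\<infinity> ks \<in> {ks. length ks = length s \<and> sorted_wrt (>) ks \<and> (\<forall>k\<in>set ks. 0 < k)}.
      (\<Prod>j<length s. q ^ ((s ! j - 1) * ks ! j) / (qint q (ks ! j)) ^ (s ! j)))"

definition jackson :: "real \<Rightarrow> real \<Rightarrow> (real \<Rightarrow> real) \<Rightarrow> real" where
  "jackson q a g = (1 - q) * a * (\<Sum>j. q ^ j * g (q ^ j * a))"

fun iter_jackson :: "real \<Rightarrow> real \<Rightarrow> (real \<Rightarrow> real) list \<Rightarrow> real" where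
  "iter_jackson q a [] = 1"
| "iter_jackson q a (g # gs) = jackson q a (\<lambda>u. g u * iter_jackson q u gs)"

end

theory Submission
  imports Defs
begin

(* Read each iterated Jackson integral as a function of its upper limit u and expand it
   as a series sum_i c_i u^(e_i) with nonnegative coefficients. Integrating against
   d_qt/t sends u^e to u^e/[e]_q, and integrating against d_qt/(y - t) with y > u sends
   u^e to sum_(n>e) y^(e-n) u^n/[n]_q; nonnegativity justifies every interchange of
   summations. Building the integrand from the innermost block outwards, the monomials
   become indexed by k_1 > ... > k_m > 0, and for the poles y_k = q^-((s_1-1)+...+(s_k-1))
   the factors y^(e-n) telescope to prod_j q^((s_j-1) k_j). The hypothesis s_1 > 1 makes
   every pole exceed 1, the upper limit of the outermost integral. *)

lemma has_sum_Sigma_nonneg: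
  fixes f :: "'a \<times> 'b \<Rightarrow> real"
  assumes "\<And>x. x \<in> A \<Longrightarrow> ((\<lambda>y. f (x, y)) has_sum g x) (B x)"
    and "(g has_sum S) A"
    and "\<And>x y. x \<in> A \<Longrightarrow> y \<in> B x \<Longrightarrow> 0 \<le> f (x, y)"
  shows "(f has_sum S) (Sigma A B)"
  using assms by (intro has_sum_SigmaI summable_on_SigmaI) (auto dest: has_sum_imp_summable)

lemma has_sum_geometric_tail:
  fixes v y :: "'a :: {real_normed_field, banach}"
  assumes "norm v < norm y"
  shows "((\<lambda>n. (1 / y) ^ (n - e) * v ^ n) has_sum (v ^ Suc e / (y - v))) {e<..}"
proof -
  have y: "y \<noteq> 0" "y - v \<noteq> 0" using assms by auto
  have "norm (v / y) < 1" using assms y by (simp add: norm_divide divide_less_eq)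
  from has_sum_cmult_right[OF has_sum_geometric_from_1[OF this], of "v ^ e"]
  have "((\<lambda>r. v ^ e * (v / y) ^ r) has_sum (v ^ Suc e / (y - v))) {1..}"
    using y by (simp add: field_simps)
  also have "?this \<longleftrightarrow> ?thesis"
    by (rule has_sum_reindex_bij_witness[of _ "\<lambda>n. n - e" "\<lambda>r. e + r"])
       (auto simp: power_add power_divide)
  finally show ?thesis .
qed

lemma jackson_has_sum_geometric:
  fixes q a :: real and b p :: "'i \<Rightarrow> real"
  assumes q: "0 < q" "q < 1"
    and b: "\<And>i. i \<in> I \<Longrightarrow> 0 \<le> b i"
    and p: "\<And>i. i \<in> I \<Longrightarrow> 0 \<le> p i \<and> p i \<le> q"
    and g: "\<And>j. ((\<lambda>i. b i * p i ^ j) has_sum (q ^ j * g (q ^ j * a))) I"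
  shows "((\<lambda>i. (1 - q) * a * b i / (1 - p i)) has_sum jackson q a g) I"
proof -
  define h where "h i = b i / (1 - p i)" for i
  have geometric: "((\<lambda>j. b i * p i ^ j) has_sum h i) UNIV" if "i \<in> I" for i
  proof -
    have "(\<lambda>j. b i * p i ^ j) sums h i"
      unfolding h_def using geometric_sums[of "p i"] sums_mult[of _ _ "b i"] p[OF that] q
      by (simp add: divide_inverse)
    thus ?thesis using b[OF that] p[OF that] by (intro sums_nonneg_imp_has_sum) auto
  qed
  have "(\<lambda>i. b i / (1 - q)) summable_on I"
    using g[of 0] by (auto intro: has_sum_imp_summable has_sum_divide_const)
  hence "h summable_on I"
  proof (rule summable_on_comparison_test)
    fix i assume i: "i \<in> I"
    show "h i \<le> b i / (1 - q)"
      unfolding h_def using b[OF i] p[OF i] q by (intro divide_left_mono) auto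
    show "0 \<le> h i"
      unfolding h_def using b[OF i] p[OF i] q by simp
  qed
  then obtain H where H: "(h has_sum H) I" by (auto simp: summable_on_def)
  \<comment> \<open>Tonelli: the double series is nonnegative, so its order of summation may be swapped.\<close>
  have "((\<lambda>(i, j). b i * p i ^ j) has_sum H) (I \<times> UNIV)"
    by (rule has_sum_Sigma_nonneg) (use geometric H b p in auto)
  hence "((\<lambda>(j, i). b i * p i ^ j) has_sum H) (UNIV \<times> I)"
    by (subst (asm) has_sum_swap) (simp add: case_prod_unfold)
  hence "((\<lambda>j. q ^ j * g (q ^ j * a)) has_sum H) UNIV"
    by (rule has_sum_SigmaD) (use g in simp)
  hence "jackson q a g = (1 - q) * a * H"
    unfolding jackson_def by (simp add: has_sum_imp_sums sums_unique[symmetric])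
  thus ?thesis using has_sum_cmult_right[OF H, of "(1 - q) * a"] by (simp add: h_def)
qed

definition nonneg_expansion ::
    "'i set \<Rightarrow> ('i \<Rightarrow> real) \<Rightarrow> ('i \<Rightarrow> nat) \<Rightarrow> real \<Rightarrow> (real \<Rightarrow> real) \<Rightarrow> bool" where
  "nonneg_expansion I c e a F \<longleftrightarrow>
     (\<forall>i\<in>I. 0 \<le> c i) \<and> (\<forall>u. 0 < u \<and> u \<le> a \<longrightarrow> ((\<lambda>i. c i * u ^ e i) has_sum F u) I)"

lemma nonneg_expansionI:
  assumes "\<And>i. i \<in> I \<Longrightarrow> 0 \<le> c i"
    and "\<And>u. 0 < u \<Longrightarrow> u \<le> a \<Longrightarrow> ((\<lambda>i. c i * u ^ e i) has_sum F u) I"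
  shows "nonneg_expansion I c e a F"
  using assms by (simp add: nonneg_expansion_def)

lemma nonneg_expansion_nonneg: "nonneg_expansion I c e a F \<Longrightarrow> i \<in> I \<Longrightarrow> 0 \<le> c i"
  by (simp add: nonneg_expansion_def)

lemma nonneg_expansion_has_sum:
  "nonneg_expansion I c e a F \<Longrightarrow> 0 < u \<Longrightarrow> u \<le> a \<Longrightarrow> ((\<lambda>i. c i * u ^ e i) has_sum F u) I"
  by (simp add: nonneg_expansion_def)

lemma nonneg_expansion_reindex:
  assumes h: "bij_betw h A B"
    and c: "\<And>x. x \<in> A \<Longrightarrow> c' x = c (h x)" and e: "\<And>x. x \<in> A \<Longrightarrow> e' x = e (h x)"
  shows "nonneg_expansion A c' e' a F \<longleftrightarrow> nonneg_expansion B c e a F"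
proof -
  have "((\<lambda>x. c' x * u ^ e' x) has_sum S) A \<longleftrightarrow> ((\<lambda>y. c y * u ^ e y) has_sum S) B" for u S
  proof -
    have "((\<lambda>x. c' x * u ^ e' x) has_sum S) A \<longleftrightarrow> ((\<lambda>x. c (h x) * u ^ e (h x)) has_sum S) A"
      using c e by (intro has_sum_cong) simp
    also have "\<dots> \<longleftrightarrow> ((\<lambda>y. c y * u ^ e y) has_sum S) B"
      using has_sum_reindex_bij_betw[OF h, of "\<lambda>y. c y * u ^ e y" S] by simp
    finally show ?thesis .
  qed
  moreover have "(\<forall>x\<in>A. 0 \<le> c' x) \<longleftrightarrow> (\<forall>y\<in>B. 0 \<le> c y)"
    using h c by (auto simp: bij_betw_def)
  ultimately show ?thesis unfolding nonneg_expansion_def by simp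
qed

lemma qint_pos: "0 < q \<Longrightarrow> q < 1 \<Longrightarrow> 0 < n \<Longrightarrow> 0 < qint q n"
  unfolding qint_def by (simp add: power_less_one_iff)

lemma jackson_node_bounds:
  fixes q u :: real
  assumes "0 < q" "q < 1" "0 < u"
  shows "0 < q ^ j * u" "q ^ j * u \<le> u"
  using assms by (simp_all add: power_le_one)

lemma nonneg_expansion_jackson_div:
  assumes q: "0 < q" "q < 1"
    and F: "nonneg_expansion I c e a F" and e: "\<And>i. i \<in> I \<Longrightarrow> 0 < e i"
  shows "nonneg_expansion I (\<lambda>i. c i / qint q (e i)) e a (\<lambda>u. jackson q u (\<lambda>t. 1 / t * F t))"
proof (rule nonneg_expansionI)
  show "0 \<le> c i / qint q (e i)" if "i \<in> I" for i
    using nonneg_expansion_nonneg[OF F that] qint_pos[OF q e[OF that]] by simp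
  fix u :: real assume u: "0 < u" "u \<le> a"
  have "((\<lambda>i. (1 - q) * u * (c i * u ^ (e i - 1)) / (1 - q ^ e i))
          has_sum jackson q u (\<lambda>t. 1 / t * F t)) I"
  proof (rule jackson_has_sum_geometric[OF q])
    show "0 \<le> c i * u ^ (e i - 1)" if "i \<in> I" for i
      using nonneg_expansion_nonneg[OF F that] u by simp
    show "0 \<le> q ^ e i \<and> q ^ e i \<le> q" if "i \<in> I" for i
      using q power_decreasing[of 1 "e i" q] e[OF that] by simp
    fix j :: nat
    define v where "v = q ^ j * u"
    have v: "0 < v" "v \<le> a"
      unfolding v_def using jackson_node_bounds[OF q u(1), of j] u(2) by linarith+
    have "((\<lambda>i. c i * v ^ e i / u) has_sum (F v / u)) I"
      using nonneg_expansion_has_sum[OF F v] by (rule has_sum_divide_const)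
    also have "?this \<longleftrightarrow> ((\<lambda>i. c i * u ^ (e i - 1) * (q ^ e i) ^ j) has_sum (F v / u)) I"
    proof (intro has_sum_cong)
      fix i assume "i \<in> I"
      then obtain d where "e i = Suc d" using e not0_implies_Suc by blast
      thus "c i * v ^ e i / u = c i * u ^ (e i - 1) * (q ^ e i) ^ j"
        using u by (simp add: v_def power_mult_distrib mult_ac flip: power_mult)
    qed
    also have "F v / u = q ^ j * (1 / v * F v)"
      using q u by (simp add: v_def)
    finally show "((\<lambda>i. c i * u ^ (e i - 1) * (q ^ e i) ^ j) has_sum (q ^ j * (1 / (q ^ j * u) * F (q ^ j * u)))) I"
      by (simp only: v_def)
  qed
  also have "?this \<longleftrightarrow> ((\<lambda>i. c i / qint q (e i) * u ^ e i) has_sum jackson q u (\<lambda>t. 1 / t * F t)) I"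
  proof (intro has_sum_cong)
    fix i assume "i \<in> I"
    then obtain d where "e i = Suc d" using e not0_implies_Suc by blast
    thus "(1 - q) * u * (c i * u ^ (e i - 1)) / (1 - q ^ e i) = c i / qint q (e i) * u ^ e i"
      by (simp add: qint_def)
  qed
  finally show "((\<lambda>i. c i / qint q (e i) * u ^ e i) has_sum jackson q u (\<lambda>t. 1 / t * F t)) I" .
qed

lemma jackson_cong_nonzero:
  assumes "0 < q" and "\<And>t. t \<noteq> 0 \<Longrightarrow> g t = g' t"
  shows "jackson q u g = jackson q u g'"
proof (cases "u = 0")
  case False
  with assms have "g (q ^ j * u) = g' (q ^ j * u)" for j by simp
  thus ?thesis by (simp add: jackson_def)
qed (simp add: jackson_def)

lemma nonneg_expansion_pole:
  assumes F: "nonneg_expansion I c e a F" and a: "0 \<le> a" and y: "a < y"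
  shows "nonneg_expansion (SIGMA i:I. {e i<..}) (\<lambda>(i, n). c i * (1 / y) ^ (n - e i)) snd a
           (\<lambda>v. v / (y - v) * F v)"
proof (rule nonneg_expansionI)
  note c = nonneg_expansion_nonneg[OF F]
  show "0 \<le> (case k of (i, n) \<Rightarrow> c i * (1 / y) ^ (n - e i))" if "k \<in> (SIGMA i:I. {e i<..})" for k
    using that c a y by auto
  fix v :: real assume v: "0 < v" "v \<le> a"
  show "((\<lambda>k. (case k of (i, n) \<Rightarrow> c i * (1 / y) ^ (n - e i)) * v ^ snd k) has_sum (v / (y - v) * F v))
          (SIGMA i:I. {e i<..})"
  proof (rule has_sum_Sigma_nonneg[where g = "\<lambda>i. c i * v ^ e i * (v / (y - v))"])
    fix i assume "i \<in> I"
    have "((\<lambda>n. c i * ((1 / y) ^ (n - e i) * v ^ n)) has_sum (c i * (v ^ Suc (e i) / (y - v)))) {e i<..}"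
      using v y by (intro has_sum_cmult_right has_sum_geometric_tail) simp
    thus "((\<lambda>n. (case (i, n) of (i, n) \<Rightarrow> c i * (1 / y) ^ (n - e i)) * v ^ snd (i, n))
            has_sum (c i * v ^ e i * (v / (y - v)))) {e i<..}"
      by (simp add: mult_ac)
  next
    have "((\<lambda>i. c i * v ^ e i * (v / (y - v))) has_sum (F v * (v / (y - v)))) I"
      using nonneg_expansion_has_sum[OF F v] by (rule has_sum_cmult_left)
    thus "((\<lambda>i. c i * v ^ e i * (v / (y - v))) has_sum (v / (y - v) * F v)) I"
      by (simp add: mult.commute)
  qed (use c v y in simp)
qed

(* At the Jackson nodes t = q^j u, which are nonzero, 1/(y - t) = (1/t) (t/(y - t)); so the
   pole integral is the d_qt/t integral of the expansion from nonneg_expansion_pole. *)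
lemma nonneg_expansion_jackson_pole:
  assumes q: "0 < q" "q < 1"
    and F: "nonneg_expansion I c e a F" and a: "0 \<le> a" and y: "a < y"
  shows "nonneg_expansion (SIGMA i:I. {e i<..}) (\<lambda>(i, n). c i * (1 / y) ^ (n - e i) / qint q n) snd a
           (\<lambda>u. jackson q u (\<lambda>t. 1 / (y - t) * F t))"
proof -
  have "nonneg_expansion (SIGMA i:I. {e i<..}) (\<lambda>k. (case k of (i, n) \<Rightarrow> c i * (1 / y) ^ (n - e i)) / qint q (snd k))
      snd a (\<lambda>u. jackson q u (\<lambda>t. 1 / t * (t / (y - t) * F t)))"
    by (rule nonneg_expansion_jackson_div[OF q nonneg_expansion_pole[OF F a y]]) auto
  moreover have "jackson q u (\<lambda>t. 1 / t * (t / (y - t) * F t)) = jackson q u (\<lambda>t. 1 / (y - t) * F t)" for u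
    using q(1) by (rule jackson_cong_nonzero) simp
  ultimately show ?thesis by (simp add: case_prod_unfold)
qed

lemma nonneg_expansion_iter_jackson_div_power:
  assumes q: "0 < q" "q < 1"
    and L: "nonneg_expansion I c e a (\<lambda>u. iter_jackson q u L)" and e: "\<And>i. i \<in> I \<Longrightarrow> 0 < e i"
  shows "nonneg_expansion I (\<lambda>i. c i / qint q (e i) ^ k) e a
           (\<lambda>u. iter_jackson q u (replicate k (\<lambda>t. 1 / t) @ L))"
proof (induction k)
  case 0 thus ?case using L by simp
next
  case (Suc k)
  from nonneg_expansion_jackson_div[OF q Suc e] show ?case
    by (simp add: divide_divide_eq_left mult.commute)
qed

definition dec_lists :: "nat \<Rightarrow> nat list set" where
  "dec_lists m = {ks. length ks = m \<and> sorted_wrt (>) ks \<and> (\<forall>k\<in>set ks. 0 < k)}"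

definition hd_or_0 :: "nat list \<Rightarrow> nat" where
  "hd_or_0 ns = (case ns of [] \<Rightarrow> 0 | n # _ \<Rightarrow> n)"

lemma dec_lists_0: "dec_lists 0 = {[]}"
  by (auto simp: dec_lists_def)

lemma Cons_in_dec_lists_iff: "n # ns \<in> dec_lists (Suc m) \<longleftrightarrow> ns \<in> dec_lists m \<and> hd_or_0 ns < n"
  by (cases ns) (auto simp: dec_lists_def hd_or_0_def)

lemma bij_betw_Cons_dec_lists:
  "bij_betw (\<lambda>(ns, n). n # ns) (SIGMA ns:dec_lists m. {hd_or_0 ns<..}) (dec_lists (Suc m))"
proof (rule bij_betwI[where g = "\<lambda>l. (tl l, hd l)"])
  show "(\<lambda>(ns, n). n # ns) \<in> (SIGMA ns:dec_lists m. {hd_or_0 ns<..}) \<rightarrow> dec_lists (Suc m)"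
    by (auto simp: Cons_in_dec_lists_iff)
  have Cons: "\<exists>n ns. l = n # ns" if "l \<in> dec_lists (Suc m)" for l
    using that by (cases l) (auto simp: dec_lists_def)
  show "(\<lambda>l. (tl l, hd l)) \<in> dec_lists (Suc m) \<rightarrow> (SIGMA ns:dec_lists m. {hd_or_0 ns<..})"
    using Cons by (fastforce simp: Cons_in_dec_lists_iff)
  show "(case (tl l, hd l) of (ns, n) \<Rightarrow> n # ns) = l" if "l \<in> dec_lists (Suc m)" for l
    using Cons[OF that] by auto
qed auto

definition qzeta_term :: "real \<Rightarrow> nat list \<Rightarrow> nat list \<Rightarrow> real" where
  "qzeta_term q s ks = (\<Prod>j<length s. q ^ ((s ! j - 1) * ks ! j) / qint q (ks ! j) ^ (s ! j))"

lemma qzeta_eq_infsum: "qzeta q s = infsum (qzeta_term q s) (dec_lists (length s))"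
  unfolding qzeta_def qzeta_term_def dec_lists_def ..

lemma qzeta_term_Nil: "qzeta_term q [] ks = 1"
  by (simp add: qzeta_term_def)

lemma qzeta_term_Cons:
  "qzeta_term q (s # ss) (n # ns) = q ^ ((s - 1) * n) / qint q n ^ s * qzeta_term q ss ns"
  by (simp add: qzeta_term_def prod.lessThan_Suc_shift del: prod.lessThan_Suc)

lemma powi_one_minus:
  fixes q :: real
  assumes "0 < n"
  shows "q powi (1 - int n) = 1 / q ^ (n - 1)"
proof -
  have "1 - int n = - int (n - 1)" using assms by simp
  hence "q powi (1 - int n) = inverse (q powi int (n - 1))"
    by (simp only: power_int_minus)
  thus ?thesis by (simp only: power_int_of_nat inverse_eq_divide)
qed

fun zeta_blocks :: "real \<Rightarrow> real \<Rightarrow> nat list \<Rightarrow> (real \<Rightarrow> real) list" where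
  "zeta_blocks q Y [] = []"
| "zeta_blocks q Y (s # ss) =
     replicate (s - 1) (\<lambda>t. 1 / t) @ (\<lambda>t. 1 / (Y * q powi (1 - int s) - t))
       # zeta_blocks q (Y * q powi (1 - int s)) ss"

lemma concat_blocks_eq_zeta_blocks:
  "concat (map (\<lambda>k. replicate (s ! k - 1) (\<lambda>t. 1 / t)
                     @ [\<lambda>t. 1 / (Y * (\<Prod>j\<le>k. q powi (1 - int (s ! j))) - t)]) [0..<length s])
     = zeta_blocks q Y s"
proof (induction s arbitrary: Y)
  case (Cons s ss)
  have upt: "[0..<length (s # ss)] = 0 # map Suc [0..<length ss]"
    by (simp add: upt_conv_Cons map_Suc_upt del: upt_Suc)
  show ?case
    unfolding upt using Cons.IH[of "Y * q powi (1 - int s)"]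
    by (simp add: prod.atMost_Suc_shift mult.assoc o_def del: prod.atMost_Suc)
qed simp

lemma qzeta_term_Cons_weight:
  assumes s: "0 < s" and mn: "m \<le> n"
  shows "(q ^ (s - 1) * r) ^ m * qzeta_term q ss ns * (q ^ (s - 1) * r) ^ (n - m) / qint q n / qint q n ^ (s - 1)
           = r ^ n * qzeta_term q (s # ss) (n # ns)"
proof -
  have "(q ^ (s - 1) * r) ^ m * (q ^ (s - 1) * r) ^ (n - m) = (q ^ (s - 1) * r) ^ n"
    using mn by (simp flip: power_add)
  also have "\<dots> = r ^ n * q ^ ((s - 1) * n)"
    by (simp add: power_mult_distrib mult.commute flip: power_mult)
  finally have powers: "(q ^ (s - 1) * r) ^ m * (q ^ (s - 1) * r) ^ (n - m) = r ^ n * q ^ ((s - 1) * n)" .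
  have "qint q n * qint q n ^ (s - 1) = qint q n ^ s"
    using s by (cases s) simp_all
  with powers show ?thesis
    by (simp add: qzeta_term_Cons divide_divide_eq_left mult_ac)
qed

(* Given 1 \<le> Y, the disjunction says that the first pole Y q^(1 - hd s) exceeds 1; the later
   poles are no smaller. *)
lemma nonneg_expansion_zeta_blocks:
  assumes q: "0 < q" "q < 1"
    and "1 \<le> Y" "1 < Y \<or> 1 < hd s" "\<forall>j\<in>set s. 0 < j"
  shows "nonneg_expansion (dec_lists (length s)) (\<lambda>ns. (1 / Y) ^ hd_or_0 ns * qzeta_term q s ns) hd_or_0 1
           (\<lambda>u. iter_jackson q u (zeta_blocks q Y s))"
  using assms(3-5)
proof (induction s arbitrary: Y)
  case Nil
  show ?case
    by (auto simp: dec_lists_0 hd_or_0_def qzeta_term_Nil intro!: nonneg_expansionI has_sum_finiteI)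
next
  case (Cons s ss)
  define Y' where "Y' = Y * q powi (1 - int s)"
  have s: "0 < s" using Cons.prems by simp
  have Y': "1 / Y' = q ^ (s - 1) * (1 / Y)" by (simp add: Y'_def powi_one_minus[OF s])
  have "q ^ (s - 1) \<le> 1" "1 < Y \<or> q ^ (s - 1) < 1"
    using q Cons.prems(2) by (auto simp: power_le_one power_less_one_iff)
  hence "1 < Y'" using Cons.prems(1) q by (auto simp: Y'_def powi_one_minus[OF s] less_divide_eq)
  let ?K = "SIGMA ns:dec_lists (length ss). {hd_or_0 ns<..}"
  let ?c = "\<lambda>(ns, n). (1 / Y') ^ hd_or_0 ns * qzeta_term q ss ns * (1 / Y') ^ (n - hd_or_0 ns) / qint q n"
  have "nonneg_expansion (dec_lists (length ss)) (\<lambda>ns. (1 / Y') ^ hd_or_0 ns * qzeta_term q ss ns) hd_or_0 1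
      (\<lambda>u. iter_jackson q u (zeta_blocks q Y' ss))"
    using Cons.IH[of Y'] \<open>1 < Y'\<close> Cons.prems(3) by simp
  from nonneg_expansion_jackson_pole[OF q this _ \<open>1 < Y'\<close>]
  have "nonneg_expansion ?K ?c snd 1 (\<lambda>u. iter_jackson q u ((\<lambda>t. 1 / (Y' - t)) # zeta_blocks q Y' ss))"
    by (simp add: case_prod_unfold)
  from nonneg_expansion_iter_jackson_div_power[OF q this, of "s - 1"]
  have "nonneg_expansion ?K (\<lambda>k. ?c k / qint q (snd k) ^ (s - 1)) snd 1
      (\<lambda>u. iter_jackson q u (zeta_blocks q Y (s # ss)))"
    by (auto simp: Y'_def)
  also have "?this \<longleftrightarrow> nonneg_expansion (dec_lists (Suc (length ss)))
      (\<lambda>ns. (1 / Y) ^ hd_or_0 ns * qzeta_term q (s # ss) ns) hd_or_0 1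
      (\<lambda>u. iter_jackson q u (zeta_blocks q Y (s # ss)))"
  proof (rule nonneg_expansion_reindex[OF bij_betw_Cons_dec_lists])
    fix k assume "k \<in> ?K"
    then obtain ns n where k: "k = (ns, n)" "hd_or_0 ns < n" by auto
    have "?c k / qint q (snd k) ^ (s - 1) = (1 / Y) ^ n * qzeta_term q (s # ss) (n # ns)"
      unfolding k(1) prod.case snd_conv Y' using s k(2) by (intro qzeta_term_Cons_weight) auto
    thus "?c k / qint q (snd k) ^ (s - 1) =
        (\<lambda>ns. (1 / Y) ^ hd_or_0 ns * qzeta_term q (s # ss) ns) ((\<lambda>(ns, n). n # ns) k)"
      using k by (simp add: hd_or_0_def)
    show "snd k = hd_or_0 ((\<lambda>(ns, n). n # ns) k)" using k by (simp add: hd_or_0_def)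
  qed
  finally show ?case by simp
qed

theorem corollary6p4:
  fixes q :: real and s :: "nat list"
  assumes "0 < q" and "q < 1"
    and "s \<noteq> []" and "\<forall>j\<in>set s. 0 < j" and "s ! 0 > 1"
  shows "qzeta q s =
    iter_jackson q 1
      (concat (map (\<lambda>k. replicate (s ! k - 1) (\<lambda>t. 1 / t)
                     @ [\<lambda>t. 1 / ((\<Prod>j\<le>k. q powi (1 - int (s ! j))) - t)])
                   [0..<length s]))"
proof -
  have "1 < hd s" using assms(3,5) by (simp add: hd_conv_nth)
  with assms(4) have "nonneg_expansion (dec_lists (length s))
      (\<lambda>ns. (1 / 1) ^ hd_or_0 ns * qzeta_term q s ns) hd_or_0 1 (\<lambda>u. iter_jackson q u (zeta_blocks q 1 s))"
    by (intro nonneg_expansion_zeta_blocks[OF assms(1,2)]) auto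
  from nonneg_expansion_has_sum[OF this, of 1]
  have "(qzeta_term q s has_sum iter_jackson q 1 (zeta_blocks q 1 s)) (dec_lists (length s))"
    by simp
  hence "qzeta q s = iter_jackson q 1 (zeta_blocks q 1 s)"
    unfolding qzeta_eq_infsum by (rule infsumI)
  thus ?thesis using concat_blocks_eq_zeta_blocks[of s 1 q] by simp
qed

end
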